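(* There exists $\theta_2\in(0,\pi/2)$, depending only on $\alpha$, such that $\mathcal Q(z,\pi(p),\theta)\subset B(p,r_p)$ for all $0<\theta\le\theta_2$, all $p\in\mathbb H\setminus\{0\}$ and all $z\in\mathbb R$ with $|z-z_p|\le|z_p|$.
   Context: $\mathbb H=\mathbb R^3$, $p=(x_p,y_p,z_p)$, group law $(x,y,z)\cdot(x',y',z')=(x+x',y+y',z+z'+\tfrac12(xy'-yx'))$, dilations $\delta_\lambda(x,y,z)=(\lambda x,\lambda y,\lambda^2z)$. Fix $\alpha>0$ such that $d_\alpha(p,q)=\inf\{r>0:\delta_{1/r}(p^{-1}\cdot q)\in B_\alpha\}$ is a distance, $B_\alpha$ the closed Euclidean ball of radius $\alpha$ at $0$. $B(p,r)=\{q:d_\alpha(q,p)\le r\}$, $r_p=d_\alpha(0,p)$. For $p\in\mathbb H$, $z\in\mathbb R$ and $\theta\in(0,\pi/2)$, $\mathcal Q(z,\pi(p),\theta)$ is the Euclidean convex hull in $\mathbb R^3$ of the four points $(0,0,z)$, $(x_p-y_p\tan\theta,\ y_p+x_p\tan\theta,\ z)$, $(x_p+y_p\tan\theta,\ y_p-x_p\tan\theta,\ z)$ and $(2x_p,2y_p,z)$. *)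

theory Defs
  imports "HOL-Analysis.Analysis"
begin

type_synonym heis = "real \<times> real \<times> real"

definition hx :: "heis \<Rightarrow> real" where "hx p = fst p"
definition hy :: "heis \<Rightarrow> real" where "hy p = fst (snd p)"
definition hz :: "heis \<Rightarrow> real" where "hz p = snd (snd p)"

definition hmult :: "heis \<Rightarrow> heis \<Rightarrow> heis" where
  "hmult p q = (hx p + hx q, hy p + hy q, hz p + hz q + (hx p * hy q - hy p * hx q) / 2)"

definition hinv :: "heis \<Rightarrow> heis" where
  "hinv p = (- hx p, - hy p, - hz p)"

definition hdil :: "real \<Rightarrow> heis \<Rightarrow> heis" where
  "hdil l p = (l * hx p, l * hy p, l\<^sup>2 * hz p)"

definition Balpha :: "real \<Rightarrow> heis set" where
  "Balpha \<alpha> = {q. (hx q)\<^sup>2 + (hy q)\<^sup>2 + (hz q)\<^sup>2 \<le> \<alpha>\<^sup>2}"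

definition d_alpha :: "real \<Rightarrow> heis \<Rightarrow> heis \<Rightarrow> real" where
  "d_alpha \<alpha> p q = Inf {r. r > 0 \<and> hdil (1 / r) (hmult (hinv p) q) \<in> Balpha \<alpha>}"

definition is_distance :: "(heis \<Rightarrow> heis \<Rightarrow> real) \<Rightarrow> bool" where
  "is_distance d \<longleftrightarrow>
     (\<forall>p q. d p q = 0 \<longleftrightarrow> p = q) \<and>
     (\<forall>p q. d p q = d q p) \<and>
     (\<forall>p q r. d p q \<le> d p r + d r q)"

definition hball :: "real \<Rightarrow> heis \<Rightarrow> real \<Rightarrow> heis set" where
  "hball \<alpha> p r = {q. d_alpha \<alpha> q p \<le> r}"

definition r_pt :: "real \<Rightarrow> heis \<Rightarrow> real" where
  "r_pt \<alpha> p = d_alpha \<alpha> 0 p"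

definition Qset :: "real \<Rightarrow> heis \<Rightarrow> real \<Rightarrow> heis set" where
  "Qset z p \<theta> = convex hull
     {(0, 0, z),
      (hx p - hy p * tan \<theta>, hy p + hx p * tan \<theta>, z),
      (hx p + hy p * tan \<theta>, hy p - hx p * tan \<theta>, z),
      (2 * hx p, 2 * hy p, z)}"

end

theory Submission
  imports Defs
begin

(* Write N_u(q) for the point delta_u(q^-1 . p).  By definition d(q,p) is the
   infimum of the radii r > 0 with N_{1/r}(q) in B_alpha, so d(x,p) <= d(0,p)
   = r_p as soon as every radius admissible for the origin is also admissible
   for x.  For fixed u the map q |-> N_u(q) is affine and B_alpha is a
   Euclidean ball, so the points q with N_u(q) in B_alpha form a convex set;
   it therefore suffices to check the four vertices of Q.  An explicit
   computation shows that the two "axial" vertices (0,0,z) and (2x_p,2y_p,z)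
   have the same gauge as the origin up to the shift |z - z_p| <= |z_p|, while
   the two rotated vertices pick up error terms of order tan(theta), which
   are absorbed once tan(theta) (1 + alpha + alpha^2/4) <= 1.  So
   theta_2 = arctan (1 / (1 + alpha + alpha^2/4)) works. *)

lemma hmult_hinv_triple:
  "hmult (hinv (x, y, z)) (a, b, c) = (a - x, b - y, c - z + (y * a - x * b) / 2)"
  by (simp add: hmult_def hinv_def hx_def hy_def hz_def algebra_simps)

lemma hdil_triple: "hdil u (a, b, c) = (u * a, u * b, u\<^sup>2 * c)"
  by (simp add: hdil_def hx_def hy_def hz_def)

lemma mem_Balpha_triple: "(a, b, c) \<in> Balpha \<alpha> \<longleftrightarrow> a\<^sup>2 + b\<^sup>2 + c\<^sup>2 \<le> \<alpha>\<^sup>2"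
  by (simp add: Balpha_def hx_def hy_def hz_def)

lemma norm_triple: "norm ((a, b, c) :: heis) = sqrt (a\<^sup>2 + b\<^sup>2 + c\<^sup>2)"
  by (simp add: norm_Pair add.assoc)

lemma Balpha_eq_cball: "Balpha \<alpha> = cball 0 \<bar>\<alpha>\<bar>"
proof (intro set_eqI)
  fix q :: heis
  obtain a b c where q: "q = (a, b, c)" by (cases q)
  have "sqrt (a\<^sup>2 + b\<^sup>2 + c\<^sup>2) \<le> \<bar>\<alpha>\<bar> \<longleftrightarrow> a\<^sup>2 + b\<^sup>2 + c\<^sup>2 \<le> \<alpha>\<^sup>2"
    by (metis real_sqrt_abs real_sqrt_le_iff)
  then show "q \<in> Balpha \<alpha> \<longleftrightarrow> q \<in> cball 0 \<bar>\<alpha>\<bar>"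
    by (simp add: q mem_Balpha_triple norm_triple)
qed

lemma convex_affine_vimage:
  fixes f :: "'a::real_vector \<Rightarrow> 'b::real_vector"
  assumes "\<And>x y m n. m + n = 1 \<Longrightarrow> f (m *\<^sub>R x + n *\<^sub>R y) = m *\<^sub>R f x + n *\<^sub>R f y"
    and "convex S"
  shows "convex (f -` S)"
  using assms unfolding convex_def by simp

lemma hdil_hmult_hinv_affine:
  assumes "m + n = 1"
  shows "hdil u (hmult (hinv (m *\<^sub>R x + n *\<^sub>R y)) p)
         = m *\<^sub>R hdil u (hmult (hinv x) p) + n *\<^sub>R hdil u (hmult (hinv y) p)"
proof -
  have m: "m = 1 - n" using assms by simp
  obtain x1 x2 x3 y1 y2 y3 a b c where "x = (x1, x2, x3)" "y = (y1, y2, y3)" "p = (a, b, c)"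
    by (metis prod.collapse)
  then show ?thesis
    unfolding m by (simp add: hmult_hinv_triple hdil_triple algebra_simps diff_divide_distrib add_divide_distrib)
qed

lemma d_alpha_mono:
  assumes "\<exists>r>0. hdil (1/r) (hmult (hinv q') p) \<in> Balpha \<alpha>"
    and "\<And>r. r > 0 \<Longrightarrow> hdil (1/r) (hmult (hinv q') p) \<in> Balpha \<alpha>
                     \<Longrightarrow> hdil (1/r) (hmult (hinv q) p) \<in> Balpha \<alpha>"
  shows "d_alpha \<alpha> q p \<le> d_alpha \<alpha> q' p"
  unfolding d_alpha_def
proof (rule cInf_superset_mono)
  show "bdd_below {r. r > 0 \<and> hdil (1/r) (hmult (hinv q) p) \<in> Balpha \<alpha>}"
    by (rule bdd_belowI[of _ 0]) auto
qed (use assms in auto)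

lemma norm_hdil_le:
  assumes "0 \<le> u" "u \<le> 1"
  shows "norm (hdil u w) \<le> u * norm w"
proof -
  obtain a b c where w: "w = (a, b, c)" by (cases w)
  have "u\<^sup>2 * (u\<^sup>2 * c\<^sup>2) \<le> u\<^sup>2 * c\<^sup>2"
    using assms by (intro mult_left_le_one_le) (auto simp: power_le_one)
  then have "(u * a)\<^sup>2 + (u * b)\<^sup>2 + (u\<^sup>2 * c)\<^sup>2 \<le> (u * norm w)\<^sup>2"
    using assms by (simp add: w norm_triple algebra_simps)
  then show ?thesis
    using assms by (auto simp: w hdil_triple norm_triple intro!: real_le_lsqrt)
qed

lemma admissible_radius_exists:
  assumes "\<alpha> > 0"
  shows "\<exists>r>0. hdil (1/r) w \<in> Balpha \<alpha>"
proof -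
  define u where "u = min 1 (\<alpha> / (norm w + 1))"
  have pos: "norm w + 1 > 0" using norm_ge_zero[of w] by linarith
  have u: "0 < u" "u \<le> 1"
    using assms pos by (auto simp: u_def)
  have "u * norm w \<le> \<alpha> / (norm w + 1) * (norm w + 1)"
    using u by (intro mult_mono) (auto simp: u_def)
  also have "\<dots> = \<alpha>" using pos by simp
  finally have "norm (hdil u w) \<le> \<alpha>"
    using norm_hdil_le[of u w] u by linarith
  then have "hdil (1 / (1/u)) w \<in> Balpha \<alpha>"
    using assms by (simp add: Balpha_eq_cball)
  then show ?thesis using u by (intro exI[of _ "1/u"]) simp
qed

lemma convex_admissible_points:
  "convex {q. hdil u (hmult (hinv q) p) \<in> Balpha \<alpha>}"
  using convex_affine_vimage[of "\<lambda>q. hdil u (hmult (hinv q) p)" "Balpha \<alpha>"]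
  by (simp add: hdil_hmult_hinv_affine Balpha_eq_cball vimage_def)

(* Key estimate for the rotated vertices: with X = u^2 |pi(p)|^2, e = u^2 (z_p - z),
   Y = u^2 |z_p| and s = +-1, the gauge t^2 X + (e + s t X/2)^2 stays below alpha^2
   for t <= 1/(1 + alpha + alpha^2/4), given the gauge X + Y^2 of the origin does. *)
lemma rotated_vertex_bound:
  fixes X Y e t s \<alpha> :: real
  assumes X: "0 \<le> X" and e: "\<bar>e\<bar> \<le> Y" and XY: "X + Y\<^sup>2 \<le> \<alpha>\<^sup>2" and \<alpha>: "0 \<le> \<alpha>"
    and t: "0 \<le> t" "t * (1 + \<alpha> + \<alpha>\<^sup>2 / 4) \<le> 1" and s: "\<bar>s\<bar> = 1"
  shows "t\<^sup>2 * X + (e + s * t * X / 2)\<^sup>2 \<le> \<alpha>\<^sup>2"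
proof -
  have "Y\<^sup>2 \<le> \<alpha>\<^sup>2" using XY X by linarith
  then have Y\<alpha>: "Y \<le> \<alpha>" using \<alpha> by (rule power2_le_imp_le)
  have X\<alpha>: "X \<le> \<alpha>\<^sup>2" using XY zero_le_power2[of Y] by linarith
  have t1: "t \<le> 1"
  proof -
    have "t * 1 \<le> t * (1 + \<alpha> + \<alpha>\<^sup>2 / 4)" using t \<alpha> by (intro mult_left_mono) auto
    then show ?thesis using t by linarith
  qed
  have tt: "t\<^sup>2 \<le> t" using t t1 by (simp add: power2_eq_square mult_left_le)
  have expand: "(e + s * t * X / 2)\<^sup>2 = e\<^sup>2 + s * t * X * e + t\<^sup>2 * X\<^sup>2 / 4"
  proof -
    have "s * s = 1" using s by (metis abs_mult_self_eq mult_1_right)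
    then show ?thesis by (simp add: power2_eq_square algebra_simps)
  qed
  have e2: "e\<^sup>2 \<le> Y\<^sup>2" using e by (metis abs_ge_zero power2_abs power_mono)
  have cross: "s * t * X * e \<le> t * X * \<alpha>"
  proof -
    have "s * t * X * e \<le> \<bar>s * t * X * e\<bar>" by simp
    also have "\<dots> = t * X * \<bar>e\<bar>" using s t X by (simp add: abs_mult)
    also have "\<dots> \<le> t * X * \<alpha>" using e Y\<alpha> t X by (intro mult_left_mono) auto
    finally show ?thesis .
  qed
  have quad: "t\<^sup>2 * X\<^sup>2 / 4 \<le> t\<^sup>2 * X * \<alpha>\<^sup>2 / 4"
  proof -
    have "X * X \<le> X * \<alpha>\<^sup>2" using X\<alpha> X by (rule mult_left_mono)
    then have "t\<^sup>2 * (X * X) \<le> t\<^sup>2 * (X * \<alpha>\<^sup>2)" by (simp add: mult_left_mono)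
    then show ?thesis by (simp add: power2_eq_square algebra_simps)
  qed
  have "t\<^sup>2 * \<alpha>\<^sup>2 \<le> t * \<alpha>\<^sup>2" using tt by (simp add: mult_right_mono)
  then have "t\<^sup>2 + t * \<alpha> + t\<^sup>2 * \<alpha>\<^sup>2 / 4 \<le> 1" using tt t by (simp add: algebra_simps)
  then have "X * (t\<^sup>2 + t * \<alpha> + t\<^sup>2 * \<alpha>\<^sup>2 / 4) \<le> X" using X by (simp add: mult_left_le)
  then have "t\<^sup>2 * X + t * X * \<alpha> + t\<^sup>2 * X * \<alpha>\<^sup>2 / 4 \<le> X"
    by (simp add: algebra_simps)
  then show ?thesis using expand e2 cross quad XY by linarith
qed

lemma Qset_vertices_admissible:
  fixes a b c z t u \<alpha> :: real
  assumes \<alpha>: "0 \<le> \<alpha>" and t: "0 \<le> t" "t * (1 + \<alpha> + \<alpha>\<^sup>2 / 4) \<le> 1"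
    and z: "\<bar>z - c\<bar> \<le> \<bar>c\<bar>" and origin: "hdil u (a, b, c) \<in> Balpha \<alpha>"
  shows "hdil u (hmult (hinv (0, 0, z)) (a, b, c)) \<in> Balpha \<alpha>"
    and "hdil u (hmult (hinv (2 * a, 2 * b, z)) (a, b, c)) \<in> Balpha \<alpha>"
    and "\<bar>s\<bar> = 1 \<Longrightarrow> hdil u (hmult (hinv (a - s * b * t, b + s * a * t, z)) (a, b, c)) \<in> Balpha \<alpha>"
proof -
  define X where "X = u\<^sup>2 * (a\<^sup>2 + b\<^sup>2)"
  define Y where "Y = u\<^sup>2 * \<bar>c\<bar>"
  define e where "e = u\<^sup>2 * (c - z)"
  have X: "0 \<le> X" unfolding X_def by simp
  have XY: "X + Y\<^sup>2 \<le> \<alpha>\<^sup>2"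
    using origin by (simp add: hdil_triple mem_Balpha_triple X_def Y_def algebra_simps)
  have e: "\<bar>e\<bar> \<le> Y"
    using z by (simp add: e_def Y_def abs_mult mult_left_mono abs_minus_commute)
  have e2: "e\<^sup>2 \<le> Y\<^sup>2" using e by (metis abs_ge_zero power2_abs power_mono)
  show "hdil u (hmult (hinv (0, 0, z)) (a, b, c)) \<in> Balpha \<alpha>"
    using e2 XY by (simp add: hmult_hinv_triple hdil_triple mem_Balpha_triple X_def e_def
        algebra_simps)
  show "hdil u (hmult (hinv (2 * a, 2 * b, z)) (a, b, c)) \<in> Balpha \<alpha>"
    using e2 XY by (simp add: hmult_hinv_triple hdil_triple mem_Balpha_triple X_def e_def
        algebra_simps)
  assume s: "\<bar>s\<bar> = 1"
  then have "s\<^sup>2 = 1" by (metis power2_abs power_one)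
  then have "(u * (s * b * t))\<^sup>2 + (u * (- (s * a * t)))\<^sup>2 = t\<^sup>2 * X"
    by (simp add: X_def algebra_simps)
  moreover have "u\<^sup>2 * (c - z + ((b + s * a * t) * a - (a - s * b * t) * b) / 2) = e + s * t * X / 2"
    by (simp add: X_def e_def power2_eq_square algebra_simps add_divide_distrib)
  ultimately show "hdil u (hmult (hinv (a - s * b * t, b + s * a * t, z)) (a, b, c)) \<in> Balpha \<alpha>"
    using rotated_vertex_bound[OF X e XY \<alpha> t s]
    by (simp add: hmult_hinv_triple hdil_triple mem_Balpha_triple)
qed

lemma hmult_hinv_zero: "hmult (hinv 0) p = p"
  by (cases p) (simp add: zero_prod_def hmult_hinv_triple)

lemma Qset_admissible:
  assumes \<alpha>: "0 \<le> \<alpha>" and t: "0 \<le> tan \<theta>" "tan \<theta> * (1 + \<alpha> + \<alpha>\<^sup>2 / 4) \<le> 1"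
    and z: "\<bar>z - hz p\<bar> \<le> \<bar>hz p\<bar>" and origin: "hdil u p \<in> Balpha \<alpha>"
  shows "Qset z p \<theta> \<subseteq> {q. hdil u (hmult (hinv q) p) \<in> Balpha \<alpha>}"
proof -
  obtain a b c where p: "p = (a, b, c)" by (cases p)
  note vertices = Qset_vertices_admissible[OF \<alpha> t, of z c u a b]
  have "\<bar>z - c\<bar> \<le> \<bar>c\<bar>" "hdil u (a, b, c) \<in> Balpha \<alpha>" using z origin by (simp_all add: p hz_def)
  note vertices = vertices[OF this]
  show ?thesis
    unfolding Qset_def p
    using vertices(1,2) vertices(3)[of 1] vertices(3)[of "-1"]
    by (intro hull_minimal convex_admissible_points) (simp add: hx_def hy_def)
qed

theorem lemma5p1:
  fixes \<alpha> :: real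
  assumes "\<alpha> > 0" and "is_distance (d_alpha \<alpha>)"
  shows "\<exists>\<theta>2. 0 < \<theta>2 \<and> \<theta>2 < pi / 2 \<and>
    (\<forall>\<theta> p z. 0 < \<theta> \<and> \<theta> \<le> \<theta>2 \<and> p \<noteq> 0 \<and> \<bar>z - hz p\<bar> \<le> \<bar>hz p\<bar> \<longrightarrow>
       Qset z p \<theta> \<subseteq> hball \<alpha> p (r_pt \<alpha> p))"
proof -
  define K where "K = 1 + \<alpha> + \<alpha>\<^sup>2 / 4"
  have K: "K > 0" using assms(1) by (simp add: K_def add_pos_nonneg)
  define \<theta>2 where "\<theta>2 = arctan (1 / K)"
  have \<theta>2: "0 < \<theta>2" "\<theta>2 < pi / 2"
    using K arctan_ubound[of "1 / K"] by (simp_all add: \<theta>2_def)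
  show ?thesis
  proof (intro exI[of _ \<theta>2] conjI allI impI \<theta>2 subsetI)
    fix \<theta> p z x
    assume H: "0 < \<theta> \<and> \<theta> \<le> \<theta>2 \<and> p \<noteq> 0 \<and> \<bar>z - hz p\<bar> \<le> \<bar>hz p\<bar>" and x: "x \<in> Qset z p \<theta>"
    have "tan \<theta> \<le> tan \<theta>2" using H \<theta>2 by (intro tan_mono_le) auto
    then have tan_K: "tan \<theta> * K \<le> 1" using K by (simp add: \<theta>2_def tan_arctan field_simps)
    have tan_pos: "0 \<le> tan \<theta>" using H \<theta>2 by (simp add: less_imp_le tan_gt_zero)
    have "d_alpha \<alpha> x p \<le> d_alpha \<alpha> 0 p"
    proof (rule d_alpha_mono)
      show "\<exists>r>0. hdil (1 / r) (hmult (hinv 0) p) \<in> Balpha \<alpha>"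
        using admissible_radius_exists[OF assms(1)] by simp
      fix r assume "hdil (1 / r) (hmult (hinv 0) p) \<in> Balpha \<alpha>"
      then show "hdil (1 / r) (hmult (hinv x) p) \<in> Balpha \<alpha>"
        using Qset_admissible[of \<alpha> \<theta> z p "1 / r"] assms(1) tan_pos tan_K H x
        by (auto simp: hmult_hinv_zero K_def)
    qed
    then show "x \<in> hball \<alpha> p (r_pt \<alpha> p)" by (simp add: hball_def r_pt_def)
  qed
qed

end
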